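(* Let $a\ge0$, $r>0$, $\beta\in\mathbb{R}$, $\theta\in(0,\frac\pi2)$ and $\lambda\in\overline{\Sigma_{\theta,r}}$. If either $\theta\in(\theta_0,\frac\pi2)$ with $\tan\theta_0\ge\frac{|\beta|}{\sqrt2}$, or ${\rm Re}\,\lambda>-\frac a2$, then $z_j(\lambda)\notin\mathbb{R}_-$ for $j=1,2$.
   Context: $\mathbb{R}_-=(-\infty,0)$. $\Sigma_{\theta,r}=\{z\in\mathbb{C}\setminus\{0\}:|\arg z|<\pi-\theta,|z|>r\}$, $\overline{\Sigma_{\theta,r}}$ its closure. $z_{1,2}(\lambda)$ are the two roots $z$ of $(\lambda-z)(\lambda+a-z)+\frac{\beta^2}{2}(z^2-az)=0$, i.e. $z_{1,2}=\frac{2\lambda+a(1+\beta^2/2)\pm\sqrt{a^2(1+\beta^2/2)^2-2\lambda^2\beta^2}}{2(1+\beta^2/2)}$. *)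

theory Defs
  imports "HOL-Analysis.Analysis"
begin

definition sector :: "real \<Rightarrow> real \<Rightarrow> complex set" where
  "sector \<theta> r = {z. z \<noteq> 0 \<and> \<bar>Arg z\<bar> < pi - \<theta> \<and> cmod z > r}"

definition neg_reals :: "complex set" where
  "neg_reals = {z. z \<in> \<real> \<and> Re z < 0}"

definition zroot1 :: "real \<Rightarrow> real \<Rightarrow> complex \<Rightarrow> complex" where
  "zroot1 a \<beta> l =
     (2 * l + of_real (a * (1 + \<beta>^2/2))
       + csqrt (of_real ((a * (1 + \<beta>^2/2))^2) - 2 * l^2 * of_real (\<beta>^2)))
     / of_real (2 * (1 + \<beta>^2/2))"

definition zroot2 :: "real \<Rightarrow> real \<Rightarrow> complex \<Rightarrow> complex" where
  "zroot2 a \<beta> l =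
     (2 * l + of_real (a * (1 + \<beta>^2/2))
       - csqrt (of_real ((a * (1 + \<beta>^2/2))^2) - 2 * l^2 * of_real (\<beta>^2)))
     / of_real (2 * (1 + \<beta>^2/2))"

end

theory Submission
  imports Defs
begin

text \<open>
  Both roots solve (l - z)(l + a - z) + b (z^2 - a z) = 0 with b = beta^2/2. For z = -t, t > 0,
  this says w^2 = a^2/4 - b (t^2 + a t) for w = l + t + a/2, so w^2 is real and w is either real
  or purely imaginary. If w is real, then w^2 <= a^2/4 forces l <= -t, a negative real number,
  which the closed sector excludes. If w is purely imaginary, then Re l = -(t + a/2) < -a/2 and
  |Im l| <= sqrt b |Re l|, so l lies in the cone around R_- of half-angle arctan (sqrt b);
  the closed sector only meets that cone when tan theta <= sqrt b.
\<close>

lemma closure_sector_subset: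
  assumes "0 \<le> \<theta>"
  shows "closure (sector \<theta> r) \<subseteq> {z. - cmod z * cos \<theta> \<le> Re z}"
proof (rule closure_minimal)
  show "sector \<theta> r \<subseteq> {z. - cmod z * cos \<theta> \<le> Re z}"
  proof
    fix z assume "z \<in> sector \<theta> r"
    hence z: "z \<noteq> 0" "\<bar>Arg z\<bar> < pi - \<theta>" by (auto simp: sector_def)
    have "- cos \<theta> = cos (pi - \<theta>)" by simp
    also have "\<dots> \<le> cos \<bar>Arg z\<bar>"
      using z assms by (intro cos_monotone_0_pi_le) auto
    also have "\<dots> = Re z / cmod z" using z by (simp add: abs_if cos_Arg)
    finally show "z \<in> {z. - cmod z * cos \<theta> \<le> Re z}"
      using z by (simp add: field_simps)
  qed
  show "closed {z. - cmod z * cos \<theta> \<le> Re z}"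
    by (intro closed_Collect_le continuous_intros)
qed

lemma tan_mult_abs_Re_le_abs_Im:
  assumes "0 \<le> \<theta>" "\<theta> < pi/2" and "- cmod z * cos \<theta> \<le> Re z" and "Re z \<le> 0"
  shows "tan \<theta> * \<bar>Re z\<bar> \<le> \<bar>Im z\<bar>"
proof -
  have cos_pos: "cos \<theta> > 0" using assms by (intro cos_gt_zero_pi) auto
  have "(- Re z)\<^sup>2 \<le> (cmod z * cos \<theta>)\<^sup>2"
    using assms(3,4) by (intro power_mono) auto
  hence "(Re z)\<^sup>2 \<le> ((Re z)\<^sup>2 + (Im z)\<^sup>2) * (cos \<theta>)\<^sup>2"
    by (simp add: cmod_power2 power_mult_distrib)
  hence "(Re z * sin \<theta>)\<^sup>2 \<le> (Im z * cos \<theta>)\<^sup>2"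
    by (simp add: sin_squared_eq algebra_simps)
  hence "\<bar>Re z * sin \<theta>\<bar> \<le> \<bar>Im z * cos \<theta>\<bar>"
    by (simp only: abs_le_square_iff)
  moreover have "sin \<theta> \<ge> 0" using assms(1,2) by (intro sin_ge_zero) auto
  ultimately have "\<bar>Re z\<bar> * sin \<theta> \<le> \<bar>Im z\<bar> * cos \<theta>"
    using cos_pos by (simp add: abs_mult)
  thus ?thesis using cos_pos by (simp add: tan_def field_simps)
qed

lemma quadratic_formula_root:
  fixes c p q s z :: "'a::field_char_0"
  assumes "c \<noteq> 0" and "s\<^sup>2 = p\<^sup>2 - 4 * c * q"
    and "z = (p + s) / (2 * c) \<or> z = (p - s) / (2 * c)"
  shows "c * z\<^sup>2 - p * z + q = 0"
proof -
  have square: "(2 * c * z - p)\<^sup>2 = s\<^sup>2"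
    using assms(1,3) by (auto simp: field_simps)
  have "4 * c * (c * z\<^sup>2 - p * z + q) = (2 * c * z - p)\<^sup>2 - (p\<^sup>2 - 4 * c * q)"
    by (simp add: power2_eq_square algebra_simps)
  also have "\<dots> = 0"
    using assms(2) square by simp
  finally show ?thesis using assms(1) by simp
qed

lemma zroot_quadratic_eq:
  assumes "z = zroot1 a \<beta> l \<or> z = zroot2 a \<beta> l"
  shows "(l - z) * (l + of_real a - z) + of_real (\<beta>\<^sup>2 / 2) * (z\<^sup>2 - of_real a * z) = 0"
proof -
  define c where "c = complex_of_real (1 + \<beta>\<^sup>2 / 2)"
  define p where "p = 2 * l + of_real (a * (1 + \<beta>\<^sup>2 / 2))"
  define s where "s = csqrt (of_real ((a * (1 + \<beta>\<^sup>2 / 2))\<^sup>2) - 2 * l\<^sup>2 * of_real (\<beta>\<^sup>2))"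
  have "1 + \<beta>\<^sup>2 / 2 > 0"
    by (simp add: add_pos_nonneg)
  hence "c \<noteq> 0"
    unfolding c_def by (metis less_irrefl of_real_eq_0_iff)
  moreover have "s\<^sup>2 = of_real ((a * (1 + \<beta>\<^sup>2 / 2))\<^sup>2) - 2 * l\<^sup>2 * of_real (\<beta>\<^sup>2)"
    unfolding s_def by simp
  hence "s\<^sup>2 = p\<^sup>2 - 4 * c * (l * (l + of_real a))"
    unfolding p_def c_def by (simp add: power2_eq_square algebra_simps)
  moreover have "z = (p + s) / (2 * c) \<or> z = (p - s) / (2 * c)"
    using assms unfolding zroot1_def zroot2_def p_def s_def c_def by simp
  ultimately have "c * z\<^sup>2 - p * z + l * (l + of_real a) = 0"
    by (rule quadratic_formula_root)
  moreover have "(l - z) * (l + of_real a - z) + of_real (\<beta>\<^sup>2 / 2) * (z\<^sup>2 - of_real a * z)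
      = c * z\<^sup>2 - p * z + l * (l + of_real a)"
    unfolding c_def p_def by (simp add: power2_eq_square field_simps)
  ultimately show ?thesis
    by simp
qed

lemma no_root_in_neg_reals:
  fixes a b \<theta> :: real and l z :: complex
  assumes "a \<ge> 0" and "b \<ge> 0" and "0 < \<theta>" and "\<theta> < pi/2"
    and sector: "- cmod l * cos \<theta> \<le> Re l"
    and angle: "(\<exists>\<theta>0. 0 \<le> \<theta>0 \<and> \<theta>0 < \<theta> \<and> tan \<theta>0 \<ge> sqrt b) \<or> Re l > - a / 2"
    and root: "(l - z) * (l + of_real a - z) + of_real b * (z\<^sup>2 - of_real a * z) = 0"
  shows "z \<notin> neg_reals"
proof
  assume "z \<in> neg_reals"
  then obtain t where t: "t > 0" "z = - of_real t"
    by (auto simp: neg_reals_def elim!: Reals_cases) (metis minus_minus)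
  define w where "w = l + of_real (t + a / 2)"
  have "w\<^sup>2 - of_real (a\<^sup>2 / 4 - b * (t\<^sup>2 + a * t))
      = (l - z) * (l + of_real a - z) + of_real b * (z\<^sup>2 - of_real a * z)"
    unfolding w_def t(2) by (simp add: power2_eq_square field_simps)
  hence w2: "w\<^sup>2 = of_real (a\<^sup>2 / 4 - b * (t\<^sup>2 + a * t))"
    using root by simp
  have re: "(Re l + t + a / 2)\<^sup>2 - (Im l)\<^sup>2 = a\<^sup>2 / 4 - b * (t\<^sup>2 + a * t)"
    using arg_cong[where f = Re, OF w2] by (simp add: w_def power2_eq_square add.assoc)
  have im: "(Re l + t + a / 2) * Im l = 0"
    using arg_cong[where f = Im, OF w2] by (simp add: w_def power2_eq_square algebra_simps)
  have tan_pos: "tan \<theta> > 0"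
    using assms(3,4) by (intro tan_gt_zero) auto
  have tan_le: "tan \<theta> * \<bar>Re l\<bar> \<le> \<bar>Im l\<bar>" if "Re l \<le> 0"
    using tan_mult_abs_Re_le_abs_Im[OF _ assms(4) sector that] assms(3) by simp
  from im consider "Im l = 0" | "Re l + t + a / 2 = 0"
    by (metis mult_eq_0_iff)
  thus False
  proof cases
    case 1
    have "(Re l + t + a / 2)\<^sup>2 \<le> (a / 2)\<^sup>2"
      using re 1 assms(1,2) t(1) by (simp add: power2_eq_square)
    hence "\<bar>Re l + t + a / 2\<bar> \<le> a / 2"
      using assms(1) by (simp add: power2_le_iff_abs_le)
    hence "Re l < 0" using abs_ge_self[of "Re l + t + a / 2"] t(1) by linarith
    thus False
      using tan_le tan_pos 1 by (simp add: zero_le_mult_iff)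
  next
    case 2
    hence "Re l < 0" and "\<not> Re l > - a / 2" using t(1) assms(1) by auto
    then obtain \<theta>0 where "0 \<le> \<theta>0" "\<theta>0 < \<theta>" "sqrt b \<le> tan \<theta>0"
      using angle by auto
    hence "sqrt b < tan \<theta>"
      using assms(4) tan_monotone[of \<theta>0 \<theta>] by auto
    have Re_l: "Re l = - (t + a / 2)" using 2 by simp
    have "(Im l)\<^sup>2 = b * (Re l)\<^sup>2 - (1 + b) * (a / 2)\<^sup>2"
      using re unfolding Re_l by (simp add: power2_eq_square field_simps)
    hence "(Im l)\<^sup>2 \<le> b * (Re l)\<^sup>2"
      using assms(2) by simp
    hence "\<bar>Im l\<bar> \<le> sqrt b * \<bar>Re l\<bar>"
      using real_sqrt_le_mono by (fastforce simp: real_sqrt_mult)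
    also have "\<dots> < tan \<theta> * \<bar>Re l\<bar>"
      using \<open>sqrt b < tan \<theta>\<close> \<open>Re l < 0\<close> by simp
    finally show False
      using tan_le \<open>Re l < 0\<close> by simp
  qed
qed

theorem lemma3p12:
  fixes a r \<beta> \<theta> :: real and l :: complex
  assumes "a \<ge> 0" and "r > 0" and "0 < \<theta>" and "\<theta> < pi/2"
    and "l \<in> closure (sector \<theta> r)"
    and "(\<exists>\<theta>0. 0 \<le> \<theta>0 \<and> \<theta>0 < \<theta> \<and> tan \<theta>0 \<ge> \<bar>\<beta>\<bar> / sqrt 2) \<or> Re l > - a / 2"
  shows "zroot1 a \<beta> l \<notin> neg_reals \<and> zroot2 a \<beta> l \<notin> neg_reals"
proof -
  have sector: "- cmod l * cos \<theta> \<le> Re l"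
    using closure_sector_subset[of \<theta> r] assms(3,5) by auto
  have "sqrt (\<beta>\<^sup>2 / 2) = \<bar>\<beta>\<bar> / sqrt 2"
    by (simp add: real_sqrt_divide)
  hence angle: "(\<exists>\<theta>0. 0 \<le> \<theta>0 \<and> \<theta>0 < \<theta> \<and> tan \<theta>0 \<ge> sqrt (\<beta>\<^sup>2 / 2)) \<or> Re l > - a / 2"
    using assms(6) by simp
  show ?thesis
    using no_root_in_neg_reals[OF assms(1) _ assms(3,4) sector angle zroot_quadratic_eq] by auto
qed

end
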